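(* Let $p$ be a prime. (1) For every $X\in\mathcal{X}_p$ there exist $n\in\mathbb{N}$ and a cyclic subgroup $H$ of the multiplicative group $\mathbb{Z}_{p^n}^\times$ such that $X=\pi_n^{-1}(H)$. (2) For every $n\in\mathbb{N}$ and every cyclic subgroup $H$ of $\mathbb{Z}_{p^n}^\times$ of order $|H|\ge\max\{p,3\}$ there exists $a\in\mathbb{N}\setminus p\mathbb{N}$ such that $\pi_n^{-1}(H)=\overline{a^{\mathbb{N}}}\in\mathcal{X}_p$.
   Context: $\mathbb{N}=\{1,2,\dots\}$, $\mathbb{N}_0=\{0\}\cup\mathbb{N}$, $x^{\mathbb{N}}=\{x^k:k\in\mathbb{N}\}$. $\mathbb{Z}_{p^n}=\mathbb{Z}/p^n\mathbb{Z}$ with unit group $\mathbb{Z}_{p^n}^\times$, and $\pi_n:\mathbb{N}\to\mathbb{Z}_{p^n}$, $x\mapsto x+p^n\mathbb{Z}$. The $p$-adic topology on $\mathbb{N}\setminus p\mathbb{N}$ is generated by the sets $x+p^m\mathbb{N}_0$ ($x,m\in\mathbb{N}$). $\mathcal{X}_p=\{\overline{a^{\mathbb{N}}}:a\in\mathbb{N}\setminus p\mathbb{N},\ a\ne1\}$, closures taken in the $p$-adic topology on $\mathbb{N}\setminus p\mathbb{N}$. *)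

theory Defs
  imports "HOL-Analysis.Analysis" "HOL-Algebra.Elementary_Groups" "HOL-Number_Theory.Residues"
begin

definition coprimeN :: "nat \<Rightarrow> nat set" where
  "coprimeN p = {x. x \<ge> 1 \<and> \<not> p dvd x}"

definition padic_top :: "nat \<Rightarrow> nat topology" where
  "padic_top p = subtopology
     (topology_generated_by {{x + p ^ m * k | k. True} | x m. x \<ge> 1 \<and> m \<ge> 1})
     (coprimeN p)"

definition powsN :: "nat \<Rightarrow> nat set" where
  "powsN a = {a ^ k | k. k \<ge> 1}"

definition Xp :: "nat \<Rightarrow> nat set set" where
  "Xp p = {(padic_top p) closure_of (powsN a) | a. a \<in> coprimeN p \<and> a \<noteq> 1}"

definition Zunits :: "nat \<Rightarrow> nat \<Rightarrow> int monoid" where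
  "Zunits p n = units_of (residue_ring (int p ^ n))"

definition preim :: "nat \<Rightarrow> nat \<Rightarrow> int set \<Rightarrow> nat set" where
  "preim p n H = {x. x \<ge> 1 \<and> int x mod (int p ^ n) \<in> H}"

end

theory Submission
  imports Defs
begin

text \<open>
  The \<open>p\<close>-adic closure of \<open>a\<^sup>\<nat>\<close> consists of the \<open>x\<close> prime to \<open>p\<close> that are congruent to
  some power of \<open>a\<close> modulo every \<open>p ^ m\<close>. Let \<open>e = p - 1\<close> (\<open>e = 2\<close> if \<open>p = 2\<close>) and let \<open>p ^ j\<close>
  exactly divide \<open>a ^ e - 1\<close>; then \<open>j \<ge> 1\<close>, and \<open>j \<ge> 2\<close> if \<open>p = 2\<close>. Lifting the exponent,
  \<open>p ^ (j + s)\<close> exactly divides \<open>a ^ (e p ^ s) - 1\<close>, so multiplying by a suitable power of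
  \<open>a ^ (e p ^ s)\<close> corrects a congruence modulo \<open>p ^ (j + s)\<close> to one modulo \<open>p ^ (j + s + 1)\<close>.
  Hence for every \<open>n \<ge> j\<close> the closure is the preimage under \<open>\<pi>\<^sub>n\<close> of the cyclic subgroup
  generated by \<open>a\<close>; \<open>n = j\<close> gives (1). For (2), lift a generator of \<open>H\<close> to such an \<open>a\<close>;
  since \<open>H\<close> has more than \<open>e\<close> elements, \<open>a ^ e \<noteq> 1\<close> modulo \<open>p ^ n\<close>, i.e. \<open>j < n\<close>.
\<close>

section \<open>Lifting the exponent\<close>

lemma one_plus_pow_cong:
  fixes x :: int
  shows "[(1 + x) ^ c = 1 + int c * x] (mod x ^ 2)"
proof (induction c)
  case 0
  then show ?case by simp
next
  case (Suc c)
  have "(1 + x) ^ Suc c = (1 + x) ^ c * (1 + x)" by simp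
  also have "[\<dots> = (1 + int c * x) * (1 + x)] (mod x ^ 2)"
    using Suc by (intro cong_mult cong_refl)
  also have "(1 + int c * x) * (1 + x) = (1 + int (Suc c) * x) + int c * x ^ 2"
    by (simp add: algebra_simps power2_eq_square)
  also have "[\<dots> = 1 + int (Suc c) * x] (mod x ^ 2)"
    by (simp add: cong_def)
  finally show ?case .
qed

lemma one_plus_pow_prime_cong:
  fixes x :: int
  assumes p: "prime p" and i: "i \<ge> 1" "p = 2 \<longrightarrow> i \<ge> 2" and x: "int p ^ i dvd x"
  shows "[(1 + x) ^ p = 1 + int p * x] (mod int p ^ (i + 2))"
proof -
  have p2: "p \<ge> 2" using p prime_ge_2_nat by blast
  have xk: "(int p ^ i) ^ k dvd x ^ k" for k
    using x by (rule dvd_power_same)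
  have high: "int p ^ (i + 2) dvd of_nat (p choose k) * x ^ k" if "2 \<le> k" "k \<le> p" for k
  proof (cases "k = p")
    case True
    have "i + 2 \<le> i * p"
    proof (cases "p = 2")
      case False
      then have "3 \<le> p" using p2 by linarith
      then have "i * 3 \<le> i * p" by simp
      then show ?thesis using i(1) by linarith
    qed (use i in simp)
    then have "int p ^ (i + 2) dvd (int p ^ i) ^ p"
      by (metis le_imp_power_dvd power_mult)
    then show ?thesis using xk[of p] True by (simp add: dvd_mult2 dvd_trans)
  next
    case False
    have "int p dvd of_nat (p choose k)"
      using dvd_choose_prime[of k p] that False p by (simp add: int_dvd_int_iff)
    moreover have "int p ^ (2 * i) dvd x ^ k"
      using xk[of k] that(1) by (metis dvd_trans le_imp_power_dvd mult.commute power_mult)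
    ultimately have "int p * int p ^ (2 * i) dvd of_nat (p choose k) * x ^ k"
      by (rule mult_dvd_mono)
    moreover have "int p ^ (i + 2) dvd int p * int p ^ (2 * i)"
      using i(1) by (simp add: le_imp_power_dvd flip: power_Suc)
    ultimately show ?thesis using dvd_trans by blast
  qed
  have "(1 + x) ^ p = (\<Sum>k\<le>p. of_nat (p choose k) * x ^ k)"
    using binomial_ring[of x 1 p] by (simp add: add.commute)
  also have "\<dots> = 1 + int p * x + (\<Sum>k\<in>{2..p}. of_nat (p choose k) * x ^ k)"
  proof -
    have "{..p} = {0, 1} \<union> {2..p}" using p2 by auto
    then show ?thesis by (simp add: sum.union_disjoint)
  qed
  also have "[\<dots> = 1 + int p * x + 0] (mod int p ^ (i + 2))"
  proof (intro cong_add cong_refl)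
    show "[(\<Sum>k\<in>{2..p}. of_nat (p choose k) * x ^ k) = 0] (mod int p ^ (i + 2))"
      unfolding cong_0_iff using high by (intro dvd_sum) auto
  qed
  finally show ?thesis by simp
qed

lemma pow_prime_exact_dvd:
  fixes z :: int
  assumes p: "prime p" and i: "i \<ge> 1" "p = 2 \<longrightarrow> i \<ge> 2"
    and z: "int p ^ i dvd z - 1" "\<not> int p ^ Suc i dvd z - 1"
  shows "int p ^ Suc i dvd z ^ p - 1" and "\<not> int p ^ Suc (Suc i) dvd z ^ p - 1"
proof -
  obtain t where t: "z - 1 = int p ^ i * t" using z(1) by blast
  have "\<not> int p dvd t"
    using z(2) t by (auto simp: mult.assoc)
  have "[z ^ p = 1 + int p * (z - 1)] (mod int p ^ (i + 2))"
    using one_plus_pow_prime_cong[OF p i z(1)] by simp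
  then obtain r where "z ^ p - (1 + int p * (z - 1)) = int p ^ (i + 2) * r"
    by (metis cong_iff_dvd_diff dvdE)
  then have e: "z ^ p - 1 = int p ^ Suc i * (t + int p * r)"
    using t by (simp add: algebra_simps)
  show "int p ^ Suc i dvd z ^ p - 1"
    using e by simp
  show "\<not> int p ^ Suc (Suc i) dvd z ^ p - 1"
  proof
    assume "int p ^ Suc (Suc i) dvd z ^ p - 1"
    then have "int p ^ Suc i * int p dvd int p ^ Suc i * (t + int p * r)"
      using e by simp
    then have "int p dvd t + int p * r"
      using p by (subst (asm) dvd_mult_cancel_left) auto
    then show False
      using \<open>\<not> int p dvd t\<close> by (simp add: dvd_add_left_iff)
  qed
qed

lemma pow_prime_power_exact_dvd:
  fixes z :: int
  assumes p: "prime p" and i: "i \<ge> 1" "p = 2 \<longrightarrow> i \<ge> 2"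
    and z: "int p ^ i dvd z - 1" "\<not> int p ^ Suc i dvd z - 1"
  shows "int p ^ (i + s) dvd z ^ p ^ s - 1 \<and> \<not> int p ^ Suc (i + s) dvd z ^ p ^ s - 1"
proof (induction s)
  case 0
  then show ?case using z by simp
next
  case (Suc s)
  have "z ^ p ^ Suc s = (z ^ p ^ s) ^ p"
    by (simp add: power_mult[symmetric] mult.commute)
  moreover have "i + s \<ge> 1" "p = 2 \<longrightarrow> i + s \<ge> 2"
    using i by auto
  ultimately show ?case
    using pow_prime_exact_dvd[OF p _ _ Suc[THEN conjunct1] Suc[THEN conjunct2]] by simp
qed

lemma mult_pow_cong_lift:
  fixes b y z :: int
  assumes p: "prime p" and m: "m \<ge> 1"
    and b: "int p ^ m dvd b - 1" "\<not> int p ^ Suc m dvd b - 1"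
    and z: "\<not> int p dvd z" and zy: "[z = y] (mod int p ^ m)"
  shows "\<exists>c. [z * b ^ c = y] (mod int p ^ Suc m)"
proof -
  obtain w where w: "b = 1 + int p ^ m * w" using b(1) by (metis add.commute diff_add_cancel dvdE)
  have "\<not> int p dvd w"
    using b(2) w by (auto simp: mult.assoc)
  obtain s where s: "z - y = int p ^ m * s"
    using zy by (metis cong_iff_dvd_diff dvdE)
  have "coprime (z * w) (int p)"
    using z \<open>\<not> int p dvd w\<close> prime_imp_coprime[of "int p"] p
    by (simp add: coprime_commute)
  then obtain u where u: "[z * w * u = 1] (mod int p)"
    using cong_solve_coprime_int by blast
  define c where "c = nat ((- u * s) mod int p)"
  have "int c = (- u * s) mod int p"
    unfolding c_def using p by (simp add: prime_gt_0_nat)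
  then have "[int c = - u * s] (mod int p)"
    by (simp add: cong_def)
  then have "[z * w * int c = z * w * (- u * s)] (mod int p)"
    by (intro cong_mult cong_refl)
  also have "z * w * (- u * s) = z * w * u * - s"
    by (simp add: algebra_simps)
  also have "[z * w * u * - s = 1 * - s] (mod int p)"
    using u by (intro cong_mult cong_refl)
  finally have "int p dvd s + z * w * int c"
    by (simp add: cong_iff_dvd_diff add.commute)
  \<comment> \<open>\<open>b ^ c = (1 + p ^ m w) ^ c \<equiv> 1 + c p ^ m w\<close> modulo \<open>p ^ (2 m)\<close>, hence modulo \<open>p ^ (m + 1)\<close>\<close>
  have "int p ^ Suc m dvd int p ^ (m * 2)"
    using m by (intro le_imp_power_dvd) simp
  then have "int p ^ Suc m dvd (int p ^ m * w) ^ 2"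
    by (simp add: power_mult_distrib power_mult[symmetric] dvd_mult2 del: power_Suc)
  then have "[b ^ c = 1 + int c * (int p ^ m * w)] (mod int p ^ Suc m)"
    using one_plus_pow_cong[of "int p ^ m * w" c] w cong_dvd_modulus by blast
  then have "[z * b ^ c = z * (1 + int c * (int p ^ m * w))] (mod int p ^ Suc m)"
    by (intro cong_mult cong_refl)
  moreover have "z * (1 + int c * (int p ^ m * w)) - y = int p ^ m * (s + z * w * int c)"
    using s by (simp add: algebra_simps)
  then have "[z * (1 + int c * (int p ^ m * w)) = y] (mod int p ^ Suc m)"
    using \<open>int p dvd s + z * w * int c\<close> by (simp add: cong_iff_dvd_diff)
  ultimately show ?thesis
    using cong_trans by blast
qed

lemma pow_cong_lift:
  fixes a x :: int
  assumes p: "prime p" and a: "\<not> int p dvd a" and j: "j \<ge> 1" "p = 2 \<longrightarrow> j \<ge> 2"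
    and e: "int p ^ j dvd a ^ e - 1" "\<not> int p ^ Suc j dvd a ^ e - 1"
    and n: "j \<le> n" and k: "[a ^ k = x] (mod int p ^ n)"
  shows "\<exists>k. [a ^ k = x] (mod int p ^ m)"
proof (cases "m \<le> n")
  case True
  then have "int p ^ m dvd int p ^ n"
    by (rule le_imp_power_dvd)
  then show ?thesis
    using k cong_dvd_modulus by blast
next
  case False
  have pi: "prime (int p)"
    using p by simp
  have "n \<le> m"
    using False by simp
  then show ?thesis
  proof (induction m rule: dec_induct)
    case base
    then show ?case using k by blast
  next
    case (step i)
    then obtain k' where k': "[a ^ k' = x] (mod int p ^ i)"
      by blast
    define b where "b = (a ^ e) ^ p ^ (i - j)"
    have "j + (i - j) = i"
      using n step.hyps by simp
    then have b: "int p ^ i dvd b - 1" "\<not> int p ^ Suc i dvd b - 1"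
      using pow_prime_power_exact_dvd[OF p j e, of "i - j"] unfolding b_def by simp_all
    have "\<not> int p dvd a ^ k'"
      using a pi prime_dvd_power by blast
    then obtain c where "[a ^ k' * b ^ c = x] (mod int p ^ Suc i)"
      using mult_pow_cong_lift[OF p _ b _ k'] j n step.hyps by auto
    moreover have "a ^ k' * b ^ c = a ^ (k' + e * p ^ (i - j) * c)"
      unfolding b_def by (simp add: power_add power_mult)
    ultimately show ?case
      by (metis cong_trans cong_refl)
  qed
qed

lemma obtain_exact_dvd_pow_minus_one:
  assumes p: "prime p" and a: "\<not> p dvd a" "a \<ge> 2"
  obtains e j where "0 < e" "e < max p 3" "j \<ge> 1" "p = 2 \<longrightarrow> j \<ge> 2"
    "int p ^ j dvd int a ^ e - 1" "\<not> int p ^ Suc j dvd int a ^ e - 1"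
proof -
  define e where "e = (if p = 2 then 2 else p - 1)"
  define i where "i = (if p = 2 then 2 else 1::nat)"
  have p2: "p \<ge> 2"
    using p prime_ge_2_nat by blast
  have i: "int p ^ i dvd int a ^ e - 1"
  proof (cases "p = 2")
    case True
    then obtain t where "a = 2 * t + 1"
      using a(1) oddE by blast
    then have "int a ^ e - 1 = 4 * (int t ^ 2 + int t)"
      using True by (simp add: e_def power2_eq_square algebra_simps)
    then show ?thesis
      using True by (simp add: i_def)
  next
    case False
    have "[a ^ (p - 1) = 1] (mod p)"
      using fermat_theorem[OF p a(1)] .
    then have "[int a ^ (p - 1) = 1] (mod int p)"
      by (metis cong_int_iff of_nat_1 of_nat_power)
    then show ?thesis
      using False by (simp add: e_def i_def cong_iff_dvd_diff)
  qed
  have e: "0 < e" "e < max p 3"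
    using p2 by (auto simp: e_def)
  then have "1 < int a ^ e"
    using a(2) by (intro one_less_power) simp_all
  then have nz: "int a ^ e - 1 \<noteq> 0"
    by simp
  have nu: "\<not> is_unit (int p)"
    using p2 by simp
  define j where "j = multiplicity (int p) (int a ^ e - 1)"
  have "int p ^ j dvd int a ^ e - 1" "\<not> int p ^ Suc j dvd int a ^ e - 1"
    using power_dvd_iff_le_multiplicity[OF nz nu] unfolding j_def by (auto simp del: power_Suc)
  moreover have "i \<le> j"
    unfolding j_def using power_dvd_iff_le_multiplicity[OF nz nu] i by blast
  ultimately show ?thesis
    using that[of e j] e by (auto simp: i_def split: if_splits)
qed

section \<open>The \<open>p\<close>-adic closure of the powers of \<open>a\<close>\<close>

abbreviation padic_basis :: "nat \<Rightarrow> nat set set" where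
  "padic_basis p \<equiv> {{x + p ^ m * k | k. True} | x m. x \<ge> 1 \<and> m \<ge> 1}"

lemma arith_progression_mono:
  assumes "m' \<le> m"
  shows "{x + p ^ m * k | k. True} \<subseteq> {x + p ^ m' * k | k :: nat. True}"
proof
  fix y assume "y \<in> {x + p ^ m * k | k. True}"
  then obtain k where "y = x + p ^ m * k"
    by blast
  also have "\<dots> = x + p ^ m' * (p ^ (m - m') * k)"
    using assms by (simp add: mult.assoc flip: power_add)
  finally show "y \<in> {x + p ^ m' * k | k. True}"
    by blast
qed

lemma padic_open_contains_progression:
  assumes "generate_topology_on (padic_basis p) T" "x \<in> T"
  shows "\<exists>m\<ge>1. {x + p ^ m * k | k. True} \<subseteq> T"
  using assms
proof (induction arbitrary: x rule: generate_topology_on.induct)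
  case Empty
  then show ?case by simp
next
  case (Int S T)
  then obtain m1 m2 where "m1 \<ge> 1" and S: "{x + p ^ m1 * k | k. True} \<subseteq> S"
    and T: "{x + p ^ m2 * k | k. True} \<subseteq> T"
    by blast
  have "{x + p ^ max m1 m2 * k | k. True} \<subseteq> S"
    using order_trans[OF arith_progression_mono S] by simp
  moreover have "{x + p ^ max m1 m2 * k | k. True} \<subseteq> T"
    using order_trans[OF arith_progression_mono T] by simp
  ultimately show ?case
    using \<open>m1 \<ge> 1\<close> by (intro exI[of _ "max m1 m2"]) auto
next
  case (UN K)
  then show ?case by blast
next
  case (Basis S)
  then obtain y m where S: "S = {y + p ^ m * k | k. True}" "m \<ge> 1"
    by blast
  with Basis obtain k0 where "x = y + p ^ m * k0"
    by blast
  then have "x + p ^ m * k = y + p ^ m * (k0 + k)" for k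
    by (simp add: algebra_simps)
  then have "{x + p ^ m * k | k. True} \<subseteq> S"
    unfolding S by blast
  then show ?case
    using S by blast
qed

lemma openin_padic_progression:
  assumes "x \<ge> 1" "m \<ge> 1"
  shows "openin (topology_generated_by (padic_basis p)) {x + p ^ m * k | k. True}"
proof (intro openin_topology_generated_by_iff[THEN iffD2] generate_topology_on.Basis)
  show "{x + p ^ m * k | k. True} \<in> padic_basis p"
    unfolding mem_Collect_eq by (rule exI[of _ x], rule exI[of _ m]) (use assms in simp)
qed

lemma powsN_meets_progression:
  assumes p: "prime p" and a: "a \<in> coprimeN p" "a \<ge> 2"
    and x: "x \<ge> 1" and k: "[a ^ k = x] (mod p ^ m)"
  shows "\<exists>y\<in>powsN a. y \<in> {x + p ^ m * k | k. True}"
proof -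
  \<comment> \<open>adding a multiple of \<open>totient (p ^ m)\<close> keeps the residue and makes \<open>a ^ K \<ge> x\<close>\<close>
  define K where "K = k + totient (p ^ m) * x"
  have "coprime a (p ^ m)"
    using a(1) prime_imp_coprime[OF p, of a] by (simp add: coprimeN_def coprime_commute)
  then have "[a ^ totient (p ^ m) = 1] (mod p ^ m)"
    by (rule euler_theorem)
  then have "[(a ^ totient (p ^ m)) ^ x = 1 ^ x] (mod p ^ m)"
    by (rule cong_pow)
  then have "[a ^ K = x * 1] (mod p ^ m)"
    unfolding K_def power_add power_mult power_one by (rule cong_mult[OF k])
  moreover have "totient (p ^ m) \<ge> 1"
    using p by (simp add: Suc_le_eq prime_gt_0_nat)
  then have "x \<le> K"
    unfolding K_def by (metis mult_1 mult_le_mono1 trans_le_add2)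
  then have "x \<le> a ^ K"
  proof -
    have "x < 2 ^ x" by (rule less_exp)
    also have "\<dots> \<le> a ^ x" using a(2) by (rule power_mono) simp
    also have "\<dots> \<le> a ^ K" using a(2) \<open>x \<le> K\<close> by (intro power_increasing) simp_all
    finally show ?thesis by simp
  qed
  ultimately have "p ^ m dvd a ^ K - x"
    by (simp add: cong_altdef_nat)
  then obtain q where "a ^ K - x = p ^ m * q" ..
  then have "a ^ K = x + p ^ m * q"
    using \<open>x \<le> a ^ K\<close> by simp
  then have "a ^ K \<in> {x + p ^ m * k | k. True}"
    by blast
  moreover have "a ^ K \<in> powsN a"
    unfolding powsN_def using x \<open>x \<le> K\<close> by (intro CollectI exI[of _ K]) simp
  ultimately show ?thesis
    by blast
qed

lemma padic_closure_powsN: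
  assumes p: "prime p" and a: "a \<in> coprimeN p" "a \<ge> 2"
  shows "padic_top p closure_of powsN a = {x \<in> coprimeN p. \<forall>m. \<exists>k. [a ^ k = x] (mod p ^ m)}"
proof -
  let ?X = "topology_generated_by (padic_basis p)"
  have "powsN a \<subseteq> coprimeN p"
    using a prime_dvd_power[OF p] by (auto simp: powsN_def coprimeN_def)
  then have closure: "padic_top p closure_of powsN a = coprimeN p \<inter> ?X closure_of powsN a"
    unfolding padic_top_def by (intro closure_of_subtopology_open) blast
  have "x \<in> ?X closure_of powsN a \<longleftrightarrow> (\<forall>m. \<exists>k. [a ^ k = x] (mod p ^ m))"
    if "x \<in> coprimeN p" for x
  proof
    have "x \<ge> 1"
      using that by (simp add: coprimeN_def)
    assume x_closure: "x \<in> ?X closure_of powsN a"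
    show "\<forall>m. \<exists>k. [a ^ k = x] (mod p ^ m)"
    proof
      fix m
      show "\<exists>k. [a ^ k = x] (mod p ^ m)"
      proof (cases "m = 0")
        case False
        have "x \<in> {x + p ^ m * k | k. True}"
          by (intro CollectI exI[of _ 0]) simp
        moreover have "openin ?X {x + p ^ m * k | k. True}"
          using \<open>x \<ge> 1\<close> False by (intro openin_padic_progression) simp_all
        ultimately have "\<exists>y. y \<in> powsN a \<and> y \<in> {x + p ^ m * k | k. True}"
          using x_closure unfolding in_closure_of by (elim conjE allE impE) (rule conjI)
        then obtain k q where kq: "x + p ^ m * q = a ^ k"
          unfolding powsN_def by auto
        then have "[a ^ k = x] (mod p ^ m)"
          by (simp add: cong_def flip: kq)
        then show ?thesis ..
      qed simp
    qed
  next
    have "x \<ge> 1"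
      using that by (simp add: coprimeN_def)
    assume cong_powers: "\<forall>m. \<exists>k. [a ^ k = x] (mod p ^ m)"
    have "x \<in> {x + p ^ 1 * k | k. True}"
      by (intro CollectI exI[of _ 0]) simp
    then have "x \<in> topspace ?X"
      using openin_subset[OF openin_padic_progression[OF \<open>x \<ge> 1\<close> order_refl]] by blast
    moreover have "\<exists>y \<in> powsN a. y \<in> T" if xT: "x \<in> T" "openin ?X T" for T
    proof -
      obtain m where T: "{x + p ^ m * k | k. True} \<subseteq> T"
        using padic_open_contains_progression[OF openin_topology_generated_by[OF xT(2)] xT(1)]
        by blast
      obtain k where "[a ^ k = x] (mod p ^ m)"
        using cong_powers by blast
      then obtain y where "y \<in> powsN a" "y \<in> {x + p ^ m * k | k. True}"
        using powsN_meets_progression[OF p a \<open>x \<ge> 1\<close>] by blast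
      then show ?thesis
        using T by blast
    qed
    ultimately show "x \<in> ?X closure_of powsN a"
      unfolding in_closure_of by blast
  qed
  then show ?thesis
    unfolding closure by blast
qed

section \<open>Cyclic subgroups of the units modulo \<open>p ^ n\<close>\<close>

lemma (in group) cyclic_group_subgroup_generated_iff:
  assumes H: "subgroup H G"
  shows "cyclic_group (subgroup_generated G H) \<longleftrightarrow> (\<exists>g\<in>carrier G. H = generate G {g})"
proof -
  have carrier_H: "carrier (subgroup_generated G H) = H"
    using H by (rule subgroup.carrier_subgroup_generated_subgroup)
  have "cyclic_group (subgroup_generated G H) \<longleftrightarrow> (\<exists>x\<in>H. H = range (\<lambda>n::int. x [^] n))"
    using group.cyclic_group[OF group_subgroup_generated, of H] int_pow_subgroup_generated[of _ H]
    unfolding carrier_H by simp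
  also have "\<dots> \<longleftrightarrow> (\<exists>g\<in>carrier G. H = generate G {g})"
  proof
    assume "\<exists>x\<in>H. H = range (\<lambda>n::int. x [^] n)"
    then obtain x where "x \<in> H" "H = range (\<lambda>n::int. x [^] n)"
      by blast
    moreover have "x \<in> carrier G"
      using \<open>x \<in> H\<close> subgroup.subset[OF H] by blast
    ultimately show "\<exists>g\<in>carrier G. H = generate G {g}"
      using generate_pow by blast
  next
    assume "\<exists>g\<in>carrier G. H = generate G {g}"
    then obtain g where "g \<in> carrier G" "H = generate G {g}"
      by blast
    moreover have "g \<in> generate G {g}"
      by (simp add: generate.incl)
    ultimately show "\<exists>x\<in>H. H = range (\<lambda>n::int. x [^] n)"
      using generate_pow by blast
  qed
  finally show ?thesis .
qed

context residues
begin

lemma units_of_pow_eq: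
  assumes "g \<in> Units R"
  shows "g [^]\<^bsub>units_of R\<^esub> (k::nat) = g ^ k mod m"
proof -
  have "g mod m = g"
    using assms by (simp add: res_units_eq)
  then show ?thesis
    using units_of_pow[OF assms] pow_cong[of g k] by simp
qed

lemma generate_units_of_singleton:
  assumes "g \<in> Units R"
  shows "generate (units_of R) {g} = range (\<lambda>k::nat. g ^ k mod m)"
  using group.generate_pow_on_finite_carrier[OF units_group _ assms[folded units_of_carrier]]
  by (auto simp: units_of_carrier units_of_pow_eq[OF assms])

lemma card_generate_units_of_le:
  assumes g: "g \<in> Units R" and e: "[g ^ e = 1] (mod m)" "0 < e"
  shows "card (generate (units_of R) {g}) \<le> e"
proof -
  have "g [^]\<^bsub>units_of R\<^esub> e = \<one>\<^bsub>units_of R\<^esub>"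
    using e(1) m_gt_one by (simp add: units_of_pow_eq[OF g] units_of_one res_one_eq cong_def)
  then have "group.ord (units_of R) g dvd e"
    using group.pow_eq_id[OF units_group] g by (simp add: units_of_carrier)
  then show ?thesis
    using group.generate_pow_card[OF units_group] g e(2)
    by (metis dvd_imp_le units_of_carrier)
qed

end

lemma residues_prime_power:
  assumes "prime p" "n \<ge> 1"
  shows "residues (int p ^ n)"
proof
  have "1 < int p"
    using assms(1) prime_gt_1_nat by simp
  moreover have "int p ^ 1 \<le> int p ^ n"
    using assms(2) calculation by (intro power_increasing) simp_all
  ultimately show "1 < int p ^ n"
    unfolding power_one_right by linarith
qed

lemma group_Zunits:
  assumes "prime p" "n \<ge> 1"
  shows "group (Zunits p n)"
proof -
  interpret residues "int p ^ n" "residue_ring (int p ^ n)"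
    by (rule residues_prime_power[OF assms])
  show ?thesis
    unfolding Zunits_def by (rule units_group)
qed

lemma mod_in_carrier_Zunits:
  assumes p: "prime p" and n: "n \<ge> 1" and a: "\<not> p dvd a"
  shows "int a mod int p ^ n \<in> carrier (Zunits p n)"
proof -
  interpret residues "int p ^ n" "residue_ring (int p ^ n)"
    by (rule residues_prime_power[OF p n])
  have "coprime (int a) (int p ^ n)"
    using a prime_imp_coprime[OF p, of a] by (simp add: coprime_commute)
  then show ?thesis
    unfolding Zunits_def units_of_carrier using m_gt_one by simp
qed

lemma preim_generate_Zunits:
  assumes p: "prime p" and n: "n \<ge> 1" and a: "\<not> p dvd a"
  shows "preim p n (generate (Zunits p n) {int a mod int p ^ n})
           = {x. x \<ge> 1 \<and> (\<exists>k. [int a ^ k = int x] (mod int p ^ n))}"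
proof -
  interpret residues "int p ^ n" "residue_ring (int p ^ n)"
    by (rule residues_prime_power[OF p n])
  have "generate (Zunits p n) {int a mod int p ^ n} = range (\<lambda>k::nat. int a ^ k mod int p ^ n)"
    using generate_units_of_singleton mod_in_carrier_Zunits[OF p n a]
    by (simp add: Zunits_def units_of_carrier power_mod)
  then show ?thesis
    unfolding preim_def cong_def by (auto intro: range_eqI[OF sym])
qed

lemma card_generate_Zunits_le:
  assumes p: "prime p" and n: "n \<ge> 1" and a: "\<not> p dvd a"
    and e: "[int a ^ e = 1] (mod int p ^ n)" "0 < e"
  shows "card (generate (Zunits p n) {int a mod int p ^ n}) \<le> e"
proof -
  interpret residues "int p ^ n" "residue_ring (int p ^ n)"
    by (rule residues_prime_power[OF p n])
  have "[(int a mod int p ^ n) ^ e = 1] (mod int p ^ n)"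
    using e(1) by (simp add: cong_def power_mod)
  then show ?thesis
    using card_generate_units_of_le mod_in_carrier_Zunits[OF p n a] e(2)
    by (simp add: Zunits_def units_of_carrier)
qed

lemma obtain_coprimeN_representative:
  assumes p: "prime p" and n: "n \<ge> 1" and g: "g \<in> carrier (Zunits p n)"
  obtains a where "a \<in> coprimeN p" "a \<ge> 2" "int a mod int p ^ n = g"
proof -
  interpret residues "int p ^ n" "residue_ring (int p ^ n)"
    by (rule residues_prime_power[OF p n])
  have g_range: "0 < g" "g < int p ^ n" "coprime g (int p ^ n)"
    using g by (auto simp: Zunits_def units_of_carrier res_units_eq)
  \<comment> \<open>\<open>nat g\<close> may be \<open>1\<close>, which \<open>Xp\<close> excludes; adding \<open>p ^ n\<close> avoids this\<close>
  define a where "a = nat g + p ^ n"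
  have a_mod: "int a mod int p ^ n = g"
    using g_range by (simp add: a_def)
  have "\<not> p dvd a"
  proof
    assume "p dvd a"
    have "int p dvd int p ^ n"
      using n by simp
    moreover have "int p dvd int a"
      using \<open>p dvd a\<close> by simp
    ultimately have "int p dvd g"
      unfolding a_mod[symmetric] by (simp add: dvd_mod)
    then have "is_unit (int p)"
      using coprime_common_divisor[OF g_range(3)] \<open>int p dvd int p ^ n\<close> by blast
    then show False
      using prime_gt_1_nat[OF p] by simp
  qed
  moreover have "nat g \<ge> 1" "p ^ n \<ge> 1"
    using g_range(1) prime_gt_0_nat[OF p] by (simp_all add: Suc_le_eq)
  then have "a \<ge> 2"
    unfolding a_def by linarith
  ultimately show ?thesis
    using that a_mod by (simp add: coprimeN_def)
qed

lemma not_dvd_of_cong_pow: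
  assumes p: "prime p" and n: "n \<ge> 1" and a: "\<not> p dvd a"
    and k: "[int a ^ k = int x] (mod int p ^ n)"
  shows "\<not> p dvd x"
proof
  assume "p dvd x"
  have "int p dvd int p ^ n"
    using n by simp
  then have "[int a ^ k = int x] (mod int p)"
    using k cong_dvd_modulus by blast
  moreover have "int p dvd int x"
    using \<open>p dvd x\<close> by simp
  ultimately have "int p dvd int a ^ k"
    by (simp add: cong_dvd_iff)
  then have "p dvd a ^ k"
    by (metis int_dvd_int_iff of_nat_power)
  then show False
    using a p prime_dvd_power by blast
qed

section \<open>Closures of powers as preimages of cyclic subgroups\<close>

lemma padic_closure_powsN_eq_preim:
  assumes p: "prime p" and a: "a \<in> coprimeN p" "a \<ge> 2"
    and j: "j \<ge> 1" "p = 2 \<longrightarrow> j \<ge> 2"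
    and e: "int p ^ j dvd int a ^ e - 1" "\<not> int p ^ Suc j dvd int a ^ e - 1"
    and n: "j \<le> n"
  shows "padic_top p closure_of powsN a = preim p n (generate (Zunits p n) {int a mod int p ^ n})"
proof -
  have int_cong: "[a ^ k = x] (mod p ^ m) \<longleftrightarrow> [int a ^ k = int x] (mod int p ^ m)" for k x m
    by (metis cong_int_iff of_nat_power)
  have "\<not> p dvd a"
    using a(1) by (simp add: coprimeN_def)
  have "x \<in> coprimeN p \<and> (\<forall>m. \<exists>k. [a ^ k = x] (mod p ^ m)) \<longleftrightarrow>
        x \<ge> 1 \<and> (\<exists>k. [int a ^ k = int x] (mod int p ^ n))" for x
  proof
    assume "x \<in> coprimeN p \<and> (\<forall>m. \<exists>k. [a ^ k = x] (mod p ^ m))"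
    then show "x \<ge> 1 \<and> (\<exists>k. [int a ^ k = int x] (mod int p ^ n))"
      using int_cong by (auto simp: coprimeN_def)
  next
    assume "x \<ge> 1 \<and> (\<exists>k. [int a ^ k = int x] (mod int p ^ n))"
    then obtain k where "x \<ge> 1" and k: "[int a ^ k = int x] (mod int p ^ n)"
      by blast
    have "\<not> p dvd x"
      using not_dvd_of_cong_pow[OF p _ \<open>\<not> p dvd a\<close> k] j n by simp
    moreover have "\<exists>k. [a ^ k = x] (mod p ^ m)" for m
      using pow_cong_lift[OF p _ j e n k] \<open>\<not> p dvd a\<close> int_cong by simp
    ultimately show "x \<in> coprimeN p \<and> (\<forall>m. \<exists>k. [a ^ k = x] (mod p ^ m))"
      using \<open>x \<ge> 1\<close> by (simp add: coprimeN_def)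
  qed
  then show ?thesis
    using j n by (simp add: padic_closure_powsN[OF p a] preim_generate_Zunits[OF p _ \<open>\<not> p dvd a\<close>])
qed

lemma Xp_eq_preim_cyclic_subgroup:
  assumes p: "prime p" and Y: "Y \<in> Xp p"
  shows "\<exists>n H. n \<ge> 1 \<and> subgroup H (Zunits p n)
           \<and> cyclic_group (subgroup_generated (Zunits p n) H) \<and> Y = preim p n H"
proof -
  obtain a where Y: "Y = padic_top p closure_of powsN a" and a: "a \<in> coprimeN p" "a \<noteq> 1"
    using Y unfolding Xp_def by blast
  then have "a \<ge> 2" "\<not> p dvd a"
    by (simp_all add: coprimeN_def)
  obtain e j where j: "j \<ge> 1" "p = 2 \<longrightarrow> j \<ge> 2"
    and e: "int p ^ j dvd int a ^ e - 1" "\<not> int p ^ Suc j dvd int a ^ e - 1"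
    using obtain_exact_dvd_pow_minus_one[OF p \<open>\<not> p dvd a\<close> \<open>a \<ge> 2\<close>] by blast
  define H where "H = generate (Zunits p j) {int a mod int p ^ j}"
  have unit: "int a mod int p ^ j \<in> carrier (Zunits p j)"
    using mod_in_carrier_Zunits[OF p j(1) \<open>\<not> p dvd a\<close>] .
  have "subgroup H (Zunits p j)"
    unfolding H_def using group.generate_is_subgroup[OF group_Zunits[OF p j(1)]] unit by simp
  moreover have "cyclic_group (subgroup_generated (Zunits p j) H)"
    using group.cyclic_group_subgroup_generated_iff[OF group_Zunits[OF p j(1)] calculation] unit H_def
    by blast
  moreover have "Y = preim p j H"
    unfolding Y H_def using padic_closure_powsN_eq_preim[OF p a(1) \<open>a \<ge> 2\<close> j e order_refl] .
  ultimately show ?thesis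
    using j(1) by blast
qed

lemma preim_cyclic_subgroup_in_Xp:
  assumes p: "prime p" and n: "n \<ge> 1" and H: "subgroup H (Zunits p n)"
    and cyclic: "cyclic_group (subgroup_generated (Zunits p n) H)" and card: "card H \<ge> max p 3"
  shows "\<exists>a. a \<in> coprimeN p \<and> preim p n H = padic_top p closure_of powsN a
           \<and> padic_top p closure_of powsN a \<in> Xp p"
proof -
  obtain g where g: "g \<in> carrier (Zunits p n)" and H_g: "H = generate (Zunits p n) {g}"
    using group.cyclic_group_subgroup_generated_iff[OF group_Zunits[OF p n] H] cyclic by blast
  obtain a where a: "a \<in> coprimeN p" "a \<ge> 2" and a_mod: "int a mod int p ^ n = g"
    using obtain_coprimeN_representative[OF p n g] by blast
  then have "\<not> p dvd a"
    by (simp add: coprimeN_def)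
  obtain e j where e_pos: "0 < e" and e_small: "e < max p 3" and j: "j \<ge> 1" "p = 2 \<longrightarrow> j \<ge> 2"
    and e: "int p ^ j dvd int a ^ e - 1" "\<not> int p ^ Suc j dvd int a ^ e - 1"
    using obtain_exact_dvd_pow_minus_one[OF p \<open>\<not> p dvd a\<close> a(2)] by blast
  \<comment> \<open>\<open>H\<close> has more than \<open>e\<close> elements, so \<open>a ^ e \<noteq> 1\<close> modulo \<open>p ^ n\<close>\<close>
  have "j < n"
  proof (rule ccontr)
    assume "\<not> j < n"
    then have "int p ^ n dvd int a ^ e - 1"
      using dvd_trans[OF le_imp_power_dvd e(1)] by simp
    then have "card H \<le> e"
      unfolding H_g a_mod[symmetric]
      using card_generate_Zunits_le[OF p n \<open>\<not> p dvd a\<close> _ e_pos] by (simp add: cong_iff_dvd_diff)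
    then show False
      using card e_small by simp
  qed
  have "padic_top p closure_of powsN a = preim p n H"
    unfolding H_g a_mod[symmetric]
    using \<open>j < n\<close> by (intro padic_closure_powsN_eq_preim[OF p a j e]) simp
  moreover have "padic_top p closure_of powsN a \<in> Xp p"
    unfolding Xp_def using a by (intro CollectI exI[of _ a]) simp
  ultimately show ?thesis
    using a(1) by blast
qed

theorem lemma4p2:
  fixes p :: nat
  assumes "Factorial_Ring.prime p"
  shows "(\<forall>Y. Y \<in> Xp p \<longrightarrow> (\<exists>n H. n \<ge> 1 \<and> subgroup H (Zunits p n)
            \<and> cyclic_group (subgroup_generated (Zunits p n) H) \<and> Y = preim p n H))
       \<and> (\<forall>n H. n \<ge> 1 \<and> subgroup H (Zunits p n)
            \<and> cyclic_group (subgroup_generated (Zunits p n) H)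
            \<and> card H \<ge> max p 3
            \<longrightarrow> (\<exists>a. a \<in> coprimeN p \<and> preim p n H = (padic_top p) closure_of (powsN a)
                  \<and> (padic_top p) closure_of (powsN a) \<in> Xp p))"
  using Xp_eq_preim_cyclic_subgroup[OF assms] preim_cyclic_subgroup_in_Xp[OF assms] by blast

end
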